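(* For positive integers $b,n$ and a nonnegative integer $c$, $$M_n(1,b,c)=M_{n-1}(c+1,b,c).$$
   Context: $$M_n(a,b,c):=\operatorname{CT}_x\prod_{i=1}^n(1-x_i)^{-b}x_i^{-a+1}\prod_{1\le i<j\le n}(x_j-x_i)^{-c},$$ where $\operatorname{CT}_x=\operatorname{CT}_{x_n}\cdots\operatorname{CT}_{x_1}$ is iterated constant-term extraction, $(1-x_i)^{-b}$ is expanded as a power series in $x_i$, and for $i<j$, $(x_j-x_i)^{-c}=x_j^{-c}(1-x_i/x_j)^{-c}$ is expanded as a power series in $x_i/x_j$. For $n=0$ the empty product gives $M_0=1$. *)

theory Defs
  imports Main
begin

text \<open>Variables are x_0,...,x_{n-1} (0-based). Expanding
  (1-x_i)^{-b} = sum_k C(b+k-1,k) x_i^k and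
  (x_j-x_i)^{-c} = x_j^{-c} sum_m C(c+m-1,m) (x_i/x_j)^m  (i<j),
  a term of the full expansion is indexed by k :: nat => nat (k i for i<n)
  and m :: nat => nat => nat (m i j for i<j<n).
  The exponent of x_i in that term is given by CT_exp.
  The iterated constant term is the sum of coefficients of all terms with
  every exponent zero (a finite set).\<close>

definition CT_exp :: "nat \<Rightarrow> int \<Rightarrow> nat \<Rightarrow> (nat \<Rightarrow> nat) \<Rightarrow> (nat \<Rightarrow> nat \<Rightarrow> nat) \<Rightarrow> nat \<Rightarrow> int" where
  "CT_exp n a c k m i =
     1 - a + int (k i) + (\<Sum>j\<in>{i<..<n}. int (m i j)) - (\<Sum>j<i. int c + int (m j i))"

definition CT_terms :: "nat \<Rightarrow> int \<Rightarrow> nat \<Rightarrow> ((nat \<Rightarrow> nat) \<times> (nat \<Rightarrow> nat \<Rightarrow> nat)) set" where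
  "CT_terms n a c = {(k, m).
     (\<forall>i. n \<le> i \<longrightarrow> k i = 0) \<and>
     (\<forall>i j. \<not> (i < j \<and> j < n) \<longrightarrow> m i j = 0) \<and>
     (\<forall>i<n. CT_exp n a c k m i = 0)}"

definition M :: "nat \<Rightarrow> int \<Rightarrow> nat \<Rightarrow> nat \<Rightarrow> int" where
  "M n a b c = (\<Sum>(k, m)\<in>CT_terms n a c.
      (\<Prod>i<n. int ((b + k i - 1) choose (k i))) *
      (\<Prod>i<n. \<Prod>j\<in>{i<..<n}. int ((c + m i j - 1) choose (m i j))))"

end

theory Submission
  imports Defs
begin

text \<open>For a = 1 the exponent of x_0 in a term of the expansion is
  k_0 + \<Sum>_j m_0j, a sum of nonnegative integers, so every term contributing to the
  constant term has k_0 = 0 and all m_0j = 0: its coefficient does not involve x_0.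
  Deleting x_0 then leaves from each factor (x_j - x_0)^(-c) only x_j^(-c), which raises
  the parameter a of the remaining variables by c. So dropping the first variable is a
  coefficient-preserving bijection from the terms of M_n(1,b,c) onto those of
  M_(n-1)(c+1,b,c).\<close>

definition term_coeff :: "nat \<Rightarrow> nat \<Rightarrow> nat \<Rightarrow> (nat \<Rightarrow> nat) \<times> (nat \<Rightarrow> nat \<Rightarrow> nat) \<Rightarrow> int" where
  "term_coeff n b c = (\<lambda>(k, m).
      (\<Prod>i<n. int ((b + k i - 1) choose (k i))) *
      (\<Prod>i<n. \<Prod>j\<in>{i<..<n}. int ((c + m i j - 1) choose (m i j))))"

lemma M_eq_sum_term_coeff: "M n a b c = sum (term_coeff n b c) (CT_terms n a c)"
  by (simp add: M_def term_coeff_def)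

definition drop_first_var ::
    "(nat \<Rightarrow> nat) \<times> (nat \<Rightarrow> nat \<Rightarrow> nat) \<Rightarrow> (nat \<Rightarrow> nat) \<times> (nat \<Rightarrow> nat \<Rightarrow> nat)" where
  "drop_first_var = (\<lambda>(k, m). (\<lambda>i. k (Suc i), \<lambda>i j. m (Suc i) (Suc j)))"

definition add_first_var ::
    "(nat \<Rightarrow> nat) \<times> (nat \<Rightarrow> nat \<Rightarrow> nat) \<Rightarrow> (nat \<Rightarrow> nat) \<times> (nat \<Rightarrow> nat \<Rightarrow> nat)" where
  "add_first_var = (\<lambda>(k, m). (case_nat 0 k, case_nat (\<lambda>_. 0) (\<lambda>i. case_nat 0 (m i))))"

lemma drop_first_var_add_first_var [simp]: "drop_first_var (add_first_var t) = t"
  by (cases t) (simp add: drop_first_var_def add_first_var_def)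

lemma image_Suc_greaterThanLessThan: "Suc ` {i<..<N} = {Suc i<..<Suc N}"
  by (metis atLeastSucLessThan_greaterThanLessThan image_Suc_atLeastLessThan)

lemma CT_exp_Suc:
  assumes "m 0 (Suc i) = 0"
  shows "CT_exp (Suc N) a c k m (Suc i) =
    CT_exp N (int c + a) c (\<lambda>i. k (Suc i)) (\<lambda>i j. m (Suc i) (Suc j)) i"
proof -
  have "(\<Sum>j\<in>{Suc i<..<Suc N}. int (m (Suc i) j)) = (\<Sum>j\<in>{i<..<N}. int (m (Suc i) (Suc j)))"
    by (simp flip: image_Suc_greaterThanLessThan add: sum.reindex)
  moreover have "(\<Sum>j<Suc i. int c + int (m j (Suc i))) =
      int c + (\<Sum>j<i. int c + int (m (Suc j) (Suc i)))"
    using assms by (simp add: sum.lessThan_Suc_shift del: sum.lessThan_Suc)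
  ultimately show ?thesis
    by (simp add: CT_exp_def)
qed

lemma CT_terms_first_var_zero:
  assumes "(k, m) \<in> CT_terms (Suc N) 1 c"
  shows "k 0 = 0" and "m 0 j = 0"
proof -
  have "CT_exp (Suc N) 1 c k m 0 = 0"
    using assms by (simp add: CT_terms_def)
  then have sum0: "int (k 0) + (\<Sum>j\<in>{0<..<Suc N}. int (m 0 j)) = 0"
    by (simp add: CT_exp_def)
  moreover have nonneg: "(\<Sum>j\<in>{0<..<Suc N}. int (m 0 j)) \<ge> 0"
    by (simp add: sum_nonneg)
  ultimately show "k 0 = 0"
    by linarith
  have "(\<Sum>j\<in>{0<..<Suc N}. int (m 0 j)) = 0"
    using sum0 nonneg by linarith
  then have "\<forall>j\<in>{0<..<Suc N}. m 0 j = 0"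
    by (subst (asm) sum_nonneg_eq_0_iff) auto
  then show "m 0 j = 0"
    using assms by (cases "0 < j \<and> j < Suc N") (auto simp: CT_terms_def)
qed

lemma drop_first_var_in_CT_terms:
  assumes "t \<in> CT_terms (Suc N) 1 c"
  shows "drop_first_var t \<in> CT_terms N (int c + 1) c"
proof -
  obtain k m where t: "t = (k, m)"
    by fastforce
  have "CT_exp N (int c + 1) c (\<lambda>i. k (Suc i)) (\<lambda>i j. m (Suc i) (Suc j)) i = 0" if "i < N" for i
    using CT_exp_Suc[of m i N 1 c k] CT_terms_first_var_zero[of k m N c] assms that
    by (simp add: t CT_terms_def)
  then show ?thesis
    using assms by (auto simp: t drop_first_var_def CT_terms_def)
qed

lemma add_first_var_in_CT_terms:
  assumes "t \<in> CT_terms N (int c + 1) c"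
  shows "add_first_var t \<in> CT_terms (Suc N) 1 c"
proof -
  obtain k m where t: "t = (k, m)"
    by fastforce
  obtain k' m' where t': "add_first_var t = (k', m')"
    by fastforce
  have k': "k' = case_nat 0 k" and m': "m' = case_nat (\<lambda>_. 0) (\<lambda>i. case_nat 0 (m i))"
    using t' by (simp_all add: t add_first_var_def)
  have "CT_exp (Suc N) 1 c k' m' (Suc i) = 0" if "i < N" for i
    using CT_exp_Suc[of m' i N 1 c k'] assms that by (simp add: t k' m' CT_terms_def)
  moreover have "CT_exp (Suc N) 1 c k' m' 0 = 0"
    by (simp add: k' m' CT_exp_def)
  ultimately have "\<forall>i<Suc N. CT_exp (Suc N) 1 c k' m' i = 0"
    using less_Suc_eq_0_disj by auto
  moreover have "m' i j = 0" if "\<not> (i < j \<and> j < Suc N)" for i j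
    using assms that by (cases i; cases j) (auto simp: t m' CT_terms_def)
  ultimately show ?thesis
    using assms unfolding t' by (auto simp: t k' CT_terms_def split: nat.split)
qed

lemma add_first_var_drop_first_var:
  assumes "t \<in> CT_terms (Suc N) 1 c"
  shows "add_first_var (drop_first_var t) = t"
proof -
  obtain k m where t: "t = (k, m)"
    by fastforce
  have "case_nat 0 (\<lambda>i. k (Suc i)) = k"
    using CT_terms_first_var_zero(1)[of k m] assms by (auto simp: t split: nat.split)
  moreover have "case_nat (\<lambda>_. 0) (\<lambda>i. case_nat 0 (\<lambda>j. m (Suc i) (Suc j))) = m"
    using CT_terms_first_var_zero(2)[of k m] assms
    by (intro ext) (auto simp: t CT_terms_def split: nat.split)
  ultimately show ?thesis
    by (simp add: t drop_first_var_def add_first_var_def)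
qed

lemma bij_betw_drop_first_var:
  "bij_betw drop_first_var (CT_terms (Suc N) 1 c) (CT_terms N (int c + 1) c)"
  by (rule bij_betw_byWitness[where f' = add_first_var])
    (auto simp: add_first_var_drop_first_var drop_first_var_in_CT_terms add_first_var_in_CT_terms)

lemma term_coeff_drop_first_var:
  assumes "k 0 = 0" and "\<And>j. m 0 j = 0"
  shows "term_coeff (Suc N) b c (k, m) = term_coeff N b c (drop_first_var (k, m))"
  using assms
  by (simp add: term_coeff_def drop_first_var_def prod.lessThan_Suc_shift prod.reindex
      flip: image_Suc_greaterThanLessThan del: prod.lessThan_Suc)

theorem corollary5p8:
  fixes n b c :: nat
  assumes "n \<ge> 1" and "b \<ge> 1"
  shows "M n 1 b c = M (n - 1) (int c + 1) b c"
proof -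
  obtain N where n: "n = Suc N"
    using assms(1) by (cases n) auto
  have "M n 1 b c = (\<Sum>t\<in>CT_terms (Suc N) 1 c. term_coeff N b c (drop_first_var t))"
    unfolding M_eq_sum_term_coeff n
    by (intro sum.cong) (auto simp: term_coeff_drop_first_var CT_terms_first_var_zero)
  also have "\<dots> = M (n - 1) (int c + 1) b c"
    by (simp add: n M_eq_sum_term_coeff sum.reindex_bij_betw[OF bij_betw_drop_first_var])
  finally show ?thesis .
qed

end
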